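(* Let $d\ge1$ be fixed, let $P$ be a set of $n\ge2$ points in $\mathbb{R}^d$, let $\varepsilon\in(0,1)$, and let $q\in\mathbb{R}^d$ be a query point. Consider the greedy permutation graph $G$ built with parameter $\varepsilon/4$ and the greedy routing procedure for $q$ run with parameter $\varepsilon/4$, as described in the context. If an edge $p_j\to p_i$ is inspected by the procedure, $d(q,p_j)<d(q,p_i)$, and $r_i<(\varepsilon/8)\,d(q,p_j)$, then $p_j$ is a $(1+\varepsilon)$-approximate nearest neighbor of $q$ in $P$, i.e., $d(q,p_j)\le(1+\varepsilon)\min_{p\in P}d(q,p)$.
   Context: Distances are Euclidean. Greedy permutation: $p_1\in P$ is arbitrary; for $i\ge2$, $p_i$ is a point of $P\setminus P_{i-1}$ furthest from $P_{i-1}=\{p_1,\dots,p_{i-1}\}$. Radii: $r_1=\max_{p\in P}d(p,p_1)$ and $r_{i-1}=d(p_i,P_{i-1})$ for $i\ge2$ (so every point of $P$ is within distance $r_i$ of $P_i$). For a parameter $\delta\in(0,1/2)$, the graph built with parameter $\delta$ has edges $p_j\to p_i$ for all $i\ge2$ and all $p_j\in P_{i-1}$ with $d(p_j,p_i)\le 8r_{i-1}/\delta$; outgoing edges of each vertex are ordered by increasing index of the destination. The greedy routing procedure with parameter $\delta$: set $c=p_1$; scan the outgoing edges $c\to p_j$ in increasing order of $j$, and as soon as $d(q,p_j)\le(1-\delta/4)d(q,c)$, set $c=p_j$ and restart scanning from the new $c$; if all outgoing edges of $c$ are scanned without a move, return $c$. Here $\delta=\varepsilon/4$. *)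

theory Defs
  imports "HOL-Analysis.Analysis"
begin

definition prefix :: "(nat \<Rightarrow> 'a) \<Rightarrow> nat \<Rightarrow> 'a set" where
  "prefix p i = p ` {1..i}"

definition greedy_perm :: "'a::metric_space set \<Rightarrow> (nat \<Rightarrow> 'a) \<Rightarrow> bool" where
  "greedy_perm P p \<longleftrightarrow>
     bij_betw p {1..card P} P \<and>
     (\<forall>i\<in>{2..card P}. \<forall>x\<in>P - prefix p (i - 1).
        infdist x (prefix p (i - 1)) \<le> infdist (p i) (prefix p (i - 1)))"

text \<open>Radii: r_1 = max distance of a point of P to p 1; r_i = d(p_(i+1), P_i) for
  2 <= i <= n-1 (i.e. r_(i-1) = d(p_i, P_(i-1))); and r_n = 0 (every point of P
  lies in P_n).\<close>
definition rad :: "'a::metric_space set \<Rightarrow> (nat \<Rightarrow> 'a) \<Rightarrow> nat \<Rightarrow> real" where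
  "rad P p i =
     (if i = 1 then Max ((\<lambda>x. dist x (p 1)) ` P)
      else if i < card P then infdist (p (i + 1)) (prefix p i)
      else 0)"

definition gp_edge :: "'a::metric_space set \<Rightarrow> (nat \<Rightarrow> 'a) \<Rightarrow> real \<Rightarrow> nat \<Rightarrow> nat \<Rightarrow> bool" where
  "gp_edge P p \<delta> j i \<longleftrightarrow>
     2 \<le> i \<and> i \<le> card P \<and> 1 \<le> j \<and> j < i \<and>
     dist (p j) (p i) \<le> 8 * rad P p (i - 1) / \<delta>"

text \<open>States (j, k) of the greedy routing procedure: the current point is p j, and
  the outgoing edges of p j with destination index < k have been scanned without a
  move.  Scanning over destinations k = 1, 2, ..., card P in increasing order and
  skipping non-edges is the same as scanning the outgoing edges in increasing order
  of destination index.  Since every state has exactly one successor, the reachable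
  states are exactly the states visited by the (deterministic) procedure.\<close>
inductive route_state :: "'a::metric_space set \<Rightarrow> (nat \<Rightarrow> 'a) \<Rightarrow> real \<Rightarrow> 'a \<Rightarrow> nat \<Rightarrow> nat \<Rightarrow> bool"
  for P p \<delta> q where
  start: "route_state P p \<delta> q 1 1"
| move: "route_state P p \<delta> q j k \<Longrightarrow> k \<le> card P \<Longrightarrow> gp_edge P p \<delta> j k \<Longrightarrow>
         dist q (p k) \<le> (1 - \<delta> / 4) * dist q (p j) \<Longrightarrow> route_state P p \<delta> q k 1"
| skip: "route_state P p \<delta> q j k \<Longrightarrow> k \<le> card P \<Longrightarrow>
         \<not> (gp_edge P p \<delta> j k \<and> dist q (p k) \<le> (1 - \<delta> / 4) * dist q (p j)) \<Longrightarrow>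
         route_state P p \<delta> q j (Suc k)"

definition inspected :: "'a::metric_space set \<Rightarrow> (nat \<Rightarrow> 'a) \<Rightarrow> real \<Rightarrow> 'a \<Rightarrow> nat \<Rightarrow> nat \<Rightarrow> bool" where
  "inspected P p \<delta> q j i \<longleftrightarrow> route_state P p \<delta> q j i \<and> gp_edge P p \<delta> j i"

end

theory Submission
  imports Defs
begin

text \<open>Suppose some x \<in> P satisfies d(q, x) \<le> (1 - 2\<delta>) d(q, p_j), where \<delta> = \<epsilon>/4.
  Along the route, x stays at distance at least (\<delta>/2) d(q, c) from every scanned point other
  than the current point c: a scanned point p_k nearer to x would have been closer to q by the
  factor 1 - \<delta>/4, so it was skipped only because p_j \<rightarrow> p_k is not an edge; then
  d(p_j, p_k) < 2 d(q, p_j) bounds r_(k-1), and the covering property of the greedy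
  permutation yields a point among p_1, ..., p_(k-1) near x, scanned earlier.
  At the inspected edge, r_i < (\<delta>/2) d(q, p_j) likewise yields p_s with s \<le> i near x.
  It is not p_j, which is far from x, nor p_i, which is farther from q than p_j; so it was
  scanned before, a contradiction.  Hence d(q, p_j) < d(q, x) / (1 - \<epsilon>/2), which is at most
  (1 + \<epsilon>) d(q, x).\<close>

lemma infdist_attains_finite:
  fixes A :: "'a::metric_space set"
  assumes "finite A" and "A \<noteq> {}"
  obtains a where "a \<in> A" and "infdist x A = dist x a"
proof -
  have "infdist x A = Min ((dist x) ` A)"
    using assms by (simp add: infdist_notempty cInf_eq_Min)
  moreover have "Min ((dist x) ` A) \<in> (dist x) ` A"
    using assms by (intro Min_in) auto
  ultimately show ?thesis using that by auto
qed

lemma greedy_perm_rad_covers: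
  fixes P :: "'a::metric_space set"
  assumes "finite P" and "greedy_perm P p" and "x \<in> P" and "1 \<le> k" and "k \<le> card P"
  obtains s where "1 \<le> s" and "s \<le> k" and "dist (p s) x \<le> rad P p k"
proof -
  consider "k = 1" | "k = card P" "k \<noteq> 1" | "1 < k" "k < card P"
    using assms(4,5) by linarith
  then show thesis
  proof cases
    case 1
    have "dist x (p 1) \<le> Max ((\<lambda>x. dist x (p 1)) ` P)"
      using assms(1,3) by (intro Max_ge) auto
    then show thesis using 1 that[of 1] by (simp add: rad_def dist_commute)
  next
    case 2
    have "bij_betw p {1..card P} P" using assms(2) unfolding greedy_perm_def by simp
    then obtain s where "s \<in> {1..card P}" and "p s = x"
      using assms(3) by (metis bij_betw_iff_bijections)
    then show thesis using 2 that[of s] by (simp add: rad_def)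
  next
    case 3
    have rad_k: "rad P p k = infdist (p (k + 1)) (prefix p k)"
      using 3 by (simp add: rad_def)
    have "infdist x (prefix p k) \<le> rad P p k"
    proof (cases "x \<in> prefix p k")
      case True
      then show ?thesis using rad_k by (simp add: infdist_nonneg)
    next
      case False
      have "k + 1 \<in> {2..card P}" using 3 by simp
      then show ?thesis
        using assms(2,3) False rad_k unfolding greedy_perm_def by fastforce
    qed
    moreover obtain y where "y \<in> prefix p k" and "infdist x (prefix p k) = dist x y"
      using infdist_attains_finite[of "prefix p k" x] assms(4) by (auto simp: prefix_def)
    ultimately show thesis using that by (auto simp: prefix_def dist_commute)
  qed
qed

lemma dist_ge_of_closer:
  fixes q x y :: "'a::metric_space"
  assumes "dist q x \<le> (1 - c) * dist q y"
  shows "c * dist q y \<le> dist y x"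
  using assms dist_triangle[of q y x] by (simp add: algebra_simps dist_commute)

lemma route_state_current_ge_1: "route_state P p \<delta> q a b \<Longrightarrow> 1 \<le> a"
  by (induction rule: route_state.induct) (auto simp: gp_edge_def)

lemma skipped_point_far:
  fixes P :: "'a::metric_space set"
  assumes "finite P" and "greedy_perm P p" and "0 < \<delta>" and "x \<in> P"
    and "1 \<le> j" and "j < k" and "k \<le> card P"
    and "\<not> (gp_edge P p \<delta> j k \<and> dist q (p k) \<le> (1 - \<delta> / 4) * dist q (p j))"
    and closer: "dist q x \<le> (1 - 2 * \<delta>) * dist q (p j)"
    and earlier_far: "\<And>t. 1 \<le> t \<Longrightarrow> t < k \<Longrightarrow> t \<noteq> j \<Longrightarrow> \<delta> / 2 * dist q (p j) \<le> dist (p t) x"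
  shows "\<delta> / 2 * dist q (p j) \<le> dist (p k) x"
proof (rule ccontr)
  let ?d = "dist q (p j)"
  assume "\<not> ?thesis"
  then have near: "dist (p k) x < \<delta> / 2 * ?d" by simp
  have far_j: "2 * \<delta> * ?d \<le> dist (p j) x"
    using closer by (intro dist_ge_of_closer) simp
  have "0 < \<delta> / 2 * ?d" using near zero_le_dist[of "p k" x] by linarith
  then have "0 < ?d" using \<open>0 < \<delta>\<close> by (simp add: zero_less_mult_iff)
  have "dist q (p k) \<le> dist q x + dist (p k) x" by (rule dist_triangle2)
  also have "\<dots> \<le> (1 - 2 * \<delta>) * ?d + \<delta> / 2 * ?d" using closer near by linarith
  also have "\<dots> \<le> (1 - \<delta> / 4) * ?d" using \<open>0 < ?d\<close> \<open>0 < \<delta>\<close> by (simp add: algebra_simps)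
  finally have closer_k: "dist q (p k) \<le> (1 - \<delta> / 4) * ?d" .
  then have "\<not> gp_edge P p \<delta> j k" using assms(8) by blast
  moreover have "dist (p j) (p k) \<le> 2 * ?d"
  proof -
    have "dist (p j) (p k) \<le> ?d + dist q (p k)"
      using dist_triangle[of "p j" "p k" q] by (simp add: dist_commute)
    moreover have "(1 - \<delta> / 4) * ?d \<le> ?d" using \<open>0 < ?d\<close> \<open>0 < \<delta>\<close> by simp
    ultimately show ?thesis using closer_k by linarith
  qed
  ultimately have "8 * rad P p (k - 1) / \<delta> < 2 * ?d"
    using assms(5-7) by (auto simp: gp_edge_def)
  then have rad_small: "rad P p (k - 1) < \<delta> / 4 * ?d"
    using \<open>0 < \<delta>\<close> by (simp add: field_simps)
  have "1 \<le> k - 1" and "k - 1 \<le> card P" using assms(5-7) by auto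
  then obtain t where "1 \<le> t" "t \<le> k - 1" "dist (p t) x \<le> rad P p (k - 1)"
    by (rule greedy_perm_rad_covers[OF assms(1,2,4)])
  moreover have "\<delta> / 4 * ?d \<le> \<delta> / 2 * ?d" using \<open>0 < ?d\<close> \<open>0 < \<delta>\<close> by simp
  ultimately have near_t: "dist (p t) x < \<delta> / 2 * ?d" using rad_small by linarith
  moreover have "\<delta> / 2 * ?d \<le> 2 * \<delta> * ?d" using \<open>0 < ?d\<close> \<open>0 < \<delta>\<close> by simp
  ultimately have "t \<noteq> j" using far_j by auto
  then have "\<delta> / 2 * ?d \<le> dist (p t) x"
    using earlier_far \<open>1 \<le> t\<close> \<open>t \<le> k - 1\<close> \<open>j < k\<close> by simp
  with near_t show False by linarith
qed

lemma route_state_scanned_far: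
  fixes P :: "'a::metric_space set"
  assumes "route_state P p \<delta> q a b"
    and "finite P" and "greedy_perm P p" and "0 < \<delta>" and "\<delta> \<le> 1/2" and "x \<in> P"
  shows "dist q x \<le> (1 - 2 * \<delta>) * dist q (p a) \<Longrightarrow> 1 \<le> s \<Longrightarrow> s < max a b \<Longrightarrow> s \<noteq> a
    \<Longrightarrow> \<delta> / 2 * dist q (p a) \<le> dist (p s) x"
  using assms(1)
proof (induction arbitrary: s rule: route_state.induct)
  case start
  then show ?case by simp
next
  case (move j k)
  have "dist q (p k) \<le> dist q (p j)"
    using move.hyps(4) \<open>0 < \<delta>\<close> mult_right_mono[of "1 - \<delta> / 4" 1 "dist q (p j)"] by simp
  then have closer_j: "dist q x \<le> (1 - 2 * \<delta>) * dist q (p j)"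
    using move.prems(1) \<open>\<delta> \<le> 1/2\<close> mult_left_mono[of "dist q (p k)" "dist q (p j)" "1 - 2 * \<delta>"]
    by simp
  have "\<delta> / 2 * dist q (p k) \<le> \<delta> / 2 * dist q (p j)"
    using \<open>dist q (p k) \<le> dist q (p j)\<close> \<open>0 < \<delta>\<close> by simp
  also have "\<dots> \<le> dist (p s) x"
  proof (cases "s = j")
    case True
    have "2 * \<delta> * dist q (p j) \<le> dist (p j) x"
      using closer_j by (intro dist_ge_of_closer) simp
    moreover have "0 \<le> \<delta> * dist q (p j)" using \<open>0 < \<delta>\<close> by simp
    ultimately show ?thesis using True by simp
  next
    case False
    have "s < max j k" using move.prems move.hyps(3) by (auto simp: gp_edge_def)
    then show ?thesis using move.IH closer_j move.prems(2) False by blast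
  qed
  finally show ?case .
next
  case (skip j k)
  show ?case
  proof (cases "s < max j k")
    case True
    then show ?thesis using skip by blast
  next
    case False
    then have "s = k" and "j < k" using skip.prems by auto
    have "\<delta> / 2 * dist q (p j) \<le> dist (p t) x" if "1 \<le> t" "t < k" "t \<noteq> j" for t
      using skip.IH[OF skip.prems(1) \<open>1 \<le> t\<close>] that by simp
    then show ?thesis
      using skipped_point_far[OF assms(2,3,4,6) route_state_current_ge_1[OF skip.hyps(1)]
          \<open>j < k\<close> skip.hyps(2,3) skip.prems(1)] \<open>s = k\<close> by blast
  qed
qed

lemma inspected_edge_dist_lower_bound:
  fixes P :: "'a::metric_space set"
  assumes "finite P" and "greedy_perm P p" and "0 < \<delta>" and "\<delta> \<le> 1/2"
    and "inspected P p \<delta> q j i" and "dist q (p j) < dist q (p i)"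
    and "rad P p i < \<delta> / 2 * dist q (p j)" and "x \<in> P"
  shows "(1 - 2 * \<delta>) * dist q (p j) < dist q x"
proof (rule ccontr)
  let ?d = "dist q (p j)"
  assume "\<not> ?thesis"
  then have closer: "dist q x \<le> (1 - 2 * \<delta>) * ?d" by simp
  have route: "route_state P p \<delta> q j i" and "j < i" and "1 \<le> i" and "i \<le> card P"
    using assms(5) by (auto simp: inspected_def gp_edge_def)
  obtain s where "1 \<le> s" "s \<le> i" and near_s: "dist (p s) x \<le> rad P p i"
    using \<open>1 \<le> i\<close> \<open>i \<le> card P\<close> by (rule greedy_perm_rad_covers[OF assms(1,2,8)])
  have "0 \<le> \<delta> * ?d" using \<open>0 < \<delta>\<close> by simp
  have "2 * \<delta> * ?d \<le> dist (p j) x"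
    using closer by (intro dist_ge_of_closer) simp
  then have "s \<noteq> j" using near_s assms(7) \<open>0 \<le> \<delta> * ?d\<close> by auto
  have "dist q (p s) \<le> dist q x + dist (p s) x" by (rule dist_triangle2)
  also have "\<dots> < (1 - 2 * \<delta>) * ?d + \<delta> / 2 * ?d" using closer near_s assms(7) by linarith
  also have "\<dots> \<le> dist q (p i)" using assms(6) \<open>0 \<le> \<delta> * ?d\<close> by (simp add: algebra_simps)
  finally have "s \<noteq> i" by auto
  then have "\<delta> / 2 * ?d \<le> dist (p s) x"
    using route_state_scanned_far[OF route assms(1-4,8) closer \<open>1 \<le> s\<close>]
      \<open>s \<le> i\<close> \<open>s \<noteq> j\<close> \<open>j < i\<close> by simp
  with near_s assms(7) show False by linarith
qed

theorem claim4p5: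
  fixes P :: "'a::euclidean_space set" and n :: nat and p :: "nat \<Rightarrow> 'a"
    and \<epsilon> :: real and q :: 'a and i j :: nat
  assumes "finite P" and "card P = n" and "n \<ge> 2"
    and "greedy_perm P p"
    and "0 < \<epsilon>" and "\<epsilon> < 1"
    and "inspected P p (\<epsilon> / 4) q j i"
    and "dist q (p j) < dist q (p i)"
    and "rad P p i < (\<epsilon> / 8) * dist q (p j)"
  shows "dist q (p j) \<le> (1 + \<epsilon>) * Min ((\<lambda>x. dist q x) ` P)"
proof -
  let ?d = "dist q (p j)"
  have "P \<noteq> {}" using assms(2,3) by auto
  then have "Min ((\<lambda>x. dist q x) ` P) \<in> (\<lambda>x. dist q x) ` P"
    using assms(1) by (intro Min_in) auto
  then obtain x where "x \<in> P" and x_min: "dist q x = Min ((\<lambda>x. dist q x) ` P)" by auto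
  have "(1 - 2 * (\<epsilon> / 4)) * ?d < dist q x"
    using assms \<open>x \<in> P\<close> by (intro inspected_edge_dist_lower_bound[where P = P]) auto
  then have lower: "(1 - \<epsilon> / 2) * ?d < dist q x" by simp
  have "1 \<le> (1 + \<epsilon>) * (1 - \<epsilon> / 2)"
    using assms(5,6) by (simp add: algebra_simps mult_le_cancel_left1)
  then have "?d \<le> (1 + \<epsilon>) * ((1 - \<epsilon> / 2) * ?d)"
    using mult_right_mono[of 1 "(1 + \<epsilon>) * (1 - \<epsilon> / 2)" ?d] by (simp add: mult.assoc)
  also have "\<dots> \<le> (1 + \<epsilon>) * dist q x"
    using lower assms(5) by (intro mult_left_mono) auto
  finally show ?thesis using x_min by simp
qed

end
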